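(* There exists an SSSCG with weakly monotonic cost functions in which every PSE prescribes the leader a mixed strategy. For instance: $|F|=1$, $R=\{r_1,r_2\}$, $c_{r_1,\ell}(1)=c_{r_2,\ell}(1)=1$, $c_{r_1,\ell}(2)=c_{r_2,\ell}(2)=2$, $c_{r_1,f}(1)=c_{r_1,f}(2)=c_{r_2,f}(1)=c_{r_2,f}(2)=1$; here any pure commitment yields pessimistic leader cost $2$, while $\sigma_\ell(r_1)=\sigma_\ell(r_2)=\tfrac12$ yields $1.5$.
   Context: A symmetric Stackelberg singleton congestion game (SSSCG) consists of a leader $\ell$, a finite set $F$ of followers, a finite set $R$ of resources which every player may select (each player selects exactly one), and cost functions $c_{i,\ell},c_{i,f}:\mathbb N\to\mathbb Q$ ($i\in R$) for the leader and the followers with $c_{i,\ell}(0)=c_{i,f}(0)=0$. The leader commits to a probability distribution $\sigma_\ell$ on $R$ (pure if it puts probability $1$ on one resource). A followers' configuration is $\nu\in\mathbb N^R$ with $\sum_i\nu_i=|F|$. The followers' expected cost of resource $i$ with $x$ followers is $c^{\sigma_\ell}_{i,f}(x)=\sigma_\ell(i)c_{i,f}(x+1)+(1-\sigma_\ell(i))c_{i,f}(x)$; the leader's cost is $c_\ell^{(\sigma_\ell,\nu)}=\sum_{i\in R}\sigma_\ell(i)c_{i,\ell}(\nu_i+1)$. $\nu$ is a Nash equilibrium for $\sigma_\ell$ ($\nu\in E^{\sigma_\ell}$) if for all $i$ with $\nu_i>0$ and all $j\ne i$, $c^{\sigma_\ell}_{i,f}(\nu_i)\le c^{\sigma_\ell}_{j,f}(\nu_j+1)$.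 A PSE is a pair $(\sigma_\ell,\nu)$ such that $\sigma_\ell$ attains the minimum over all leader strategies of $\max_{\nu'\in E^{\sigma_\ell}}c_\ell^{(\sigma_\ell,\nu')}$ and $\nu\in E^{\sigma_\ell}$ attains that maximum. Weakly monotonic: $c_{i,\ell}(x)\le c_{i,\ell}(x+1)$, $c_{i,f}(x)\le c_{i,f}(x+1)$ for all $i,x$. *)

theory Defs
  imports Complex_Main
begin

text \<open>A symmetric Stackelberg singleton congestion game is given by a finite
nonempty resource set R, the number n = |F| of followers (followers are
symmetric, so only their number matters), and cost functions
cl i x (leader) and cf i x (followers) for resource i and load x.\<close>

definition sscg :: "'r set \<Rightarrow> ('r \<Rightarrow> nat \<Rightarrow> rat) \<Rightarrow> ('r \<Rightarrow> nat \<Rightarrow> rat) \<Rightarrow> bool" where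
  "sscg R cl cf \<longleftrightarrow> finite R \<and> R \<noteq> {} \<and> (\<forall>i\<in>R. cl i 0 = 0 \<and> cf i 0 = 0)"

definition weakly_monotonic :: "'r set \<Rightarrow> ('r \<Rightarrow> nat \<Rightarrow> rat) \<Rightarrow> ('r \<Rightarrow> nat \<Rightarrow> rat) \<Rightarrow> bool" where
  "weakly_monotonic R cl cf \<longleftrightarrow> (\<forall>i\<in>R. \<forall>x. cl i x \<le> cl i (Suc x) \<and> cf i x \<le> cf i (Suc x))"

definition leader_strategy :: "'r set \<Rightarrow> ('r \<Rightarrow> real) \<Rightarrow> bool" where
  "leader_strategy R \<sigma> \<longleftrightarrow> (\<forall>i\<in>R. 0 \<le> \<sigma> i) \<and> (\<forall>i. i \<notin> R \<longrightarrow> \<sigma> i = 0) \<and> (\<Sum>i\<in>R. \<sigma> i) = 1"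

definition pure_strategy :: "'r set \<Rightarrow> ('r \<Rightarrow> real) \<Rightarrow> bool" where
  "pure_strategy R \<sigma> \<longleftrightarrow> (\<exists>i\<in>R. \<sigma> i = 1)"

definition config :: "'r set \<Rightarrow> nat \<Rightarrow> ('r \<Rightarrow> nat) \<Rightarrow> bool" where
  "config R n \<nu> \<longleftrightarrow> (\<forall>i. i \<notin> R \<longrightarrow> \<nu> i = 0) \<and> (\<Sum>i\<in>R. \<nu> i) = n"

definition follower_cost :: "('r \<Rightarrow> nat \<Rightarrow> rat) \<Rightarrow> ('r \<Rightarrow> real) \<Rightarrow> 'r \<Rightarrow> nat \<Rightarrow> real" where
  "follower_cost cf \<sigma> i x = \<sigma> i * real_of_rat (cf i (Suc x)) + (1 - \<sigma> i) * real_of_rat (cf i x)"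

definition leader_cost :: "'r set \<Rightarrow> ('r \<Rightarrow> nat \<Rightarrow> rat) \<Rightarrow> ('r \<Rightarrow> real) \<Rightarrow> ('r \<Rightarrow> nat) \<Rightarrow> real" where
  "leader_cost R cl \<sigma> \<nu> = (\<Sum>i\<in>R. \<sigma> i * real_of_rat (cl i (\<nu> i + 1)))"

definition follower_NE :: "'r set \<Rightarrow> nat \<Rightarrow> ('r \<Rightarrow> nat \<Rightarrow> rat) \<Rightarrow> ('r \<Rightarrow> real) \<Rightarrow> ('r \<Rightarrow> nat) \<Rightarrow> bool" where
  "follower_NE R n cf \<sigma> \<nu> \<longleftrightarrow> config R n \<nu> \<and>
     (\<forall>i\<in>R. \<forall>j\<in>R. \<nu> i > 0 \<and> j \<noteq> i \<longrightarrow>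
        follower_cost cf \<sigma> i (\<nu> i) \<le> follower_cost cf \<sigma> j (\<nu> j + 1))"

text \<open>Pessimistic Stackelberg equilibrium: \<nu> attains the maximum leader cost over
E^\<sigma>, and this maximum is minimal among all leader strategies (i.e. for every
other strategy some equilibrium gives the leader at least as high a cost).\<close>
definition PSE :: "'r set \<Rightarrow> nat \<Rightarrow> ('r \<Rightarrow> nat \<Rightarrow> rat) \<Rightarrow> ('r \<Rightarrow> nat \<Rightarrow> rat) \<Rightarrow>
                   ('r \<Rightarrow> real) \<Rightarrow> ('r \<Rightarrow> nat) \<Rightarrow> bool" where
  "PSE R n cl cf \<sigma> \<nu> \<longleftrightarrow> leader_strategy R \<sigma> \<and> follower_NE R n cf \<sigma> \<nu> \<and>
     (\<forall>\<nu>'. follower_NE R n cf \<sigma> \<nu>' \<longrightarrow> leader_cost R cl \<sigma> \<nu>' \<le> leader_cost R cl \<sigma> \<nu>) \<and>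
     (\<forall>\<sigma>'. leader_strategy R \<sigma>' \<longrightarrow>
        (\<exists>\<nu>'. follower_NE R n cf \<sigma>' \<nu>' \<and> leader_cost R cl \<sigma> \<nu> \<le> leader_cost R cl \<sigma>' \<nu>'))"

end

theory Submission
  imports Defs
begin

text \<open>With two resources and a single follower whose cost is 1 on every occupied
resource, the follower is indifferent, so every configuration is an equilibrium and
a pessimistic follower joins the resource the leader is most likely to pick. The
leader's worst-case cost under \<sigma> is therefore 1 + max \<sigma>, which is 2 for every pure
strategy but 3/2 for the uniform one, and 3/2 is optimal since max \<sigma> \<ge> 1/2.\<close>

definition two_resources :: "nat set" where
  "two_resources = {0, 1}"

definition load_leader_cost :: "nat \<Rightarrow> nat \<Rightarrow> rat" where
  "load_leader_cost i x = of_nat x"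

definition occupied_follower_cost :: "nat \<Rightarrow> nat \<Rightarrow> rat" where
  "occupied_follower_cost i x = (if x = 0 then 0 else 1)"

definition single_load :: "nat \<Rightarrow> nat \<Rightarrow> nat" where
  "single_load k i = (if i = k then 1 else 0)"

definition uniform_strategy :: "nat \<Rightarrow> real" where
  "uniform_strategy i = (if i \<in> two_resources then 1/2 else 0)"

abbreviation example_NE :: "(nat \<Rightarrow> real) \<Rightarrow> (nat \<Rightarrow> nat) \<Rightarrow> bool" where
  "example_NE \<equiv> follower_NE two_resources 1 occupied_follower_cost"

abbreviation example_leader_cost :: "(nat \<Rightarrow> real) \<Rightarrow> (nat \<Rightarrow> nat) \<Rightarrow> real" where
  "example_leader_cost \<equiv> leader_cost two_resources load_leader_cost"

abbreviation example_PSE :: "(nat \<Rightarrow> real) \<Rightarrow> (nat \<Rightarrow> nat) \<Rightarrow> bool" where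
  "example_PSE \<equiv> PSE two_resources 1 load_leader_cost occupied_follower_cost"

lemma example_game: "sscg two_resources load_leader_cost occupied_follower_cost"
  by (simp add: sscg_def two_resources_def load_leader_cost_def occupied_follower_cost_def)

lemma example_weakly_monotonic:
  "weakly_monotonic two_resources load_leader_cost occupied_follower_cost"
  by (simp add: weakly_monotonic_def load_leader_cost_def occupied_follower_cost_def)

lemma example_NE_iff_config: "example_NE \<sigma> \<nu> \<longleftrightarrow> config two_resources 1 \<nu>"
  by (auto simp: follower_NE_def follower_cost_def occupied_follower_cost_def algebra_simps)

lemma config_two_resources:
  assumes "config two_resources 1 \<nu>"
  shows "real (\<nu> 0) + real (\<nu> 1) = 1"
proof -
  have "\<nu> 0 + \<nu> 1 = 1"
    using assms by (simp add: config_def two_resources_def)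
  then show ?thesis
    by (metis of_nat_1 of_nat_add)
qed

lemma config_single_load: "k \<in> two_resources \<Longrightarrow> config two_resources 1 (single_load k)"
  by (auto simp: config_def single_load_def two_resources_def)

lemma example_leader_cost_eq:
  "example_leader_cost \<sigma> \<nu> = \<sigma> 0 * (real (\<nu> 0) + 1) + \<sigma> 1 * (real (\<nu> 1) + 1)"
  by (simp add: leader_cost_def two_resources_def load_leader_cost_def of_rat_add algebra_simps)

lemma leader_strategy_two_resources:
  "leader_strategy two_resources \<sigma> \<Longrightarrow> 0 \<le> \<sigma> 0 \<and> 0 \<le> \<sigma> 1 \<and> \<sigma> 0 + \<sigma> 1 = 1"
  by (simp add: leader_strategy_def two_resources_def)

lemma example_leader_cost_single_load:
  assumes "leader_strategy two_resources \<sigma>" and "k \<in> two_resources"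
  shows "example_leader_cost \<sigma> (single_load k) = 1 + \<sigma> k"
  using assms leader_strategy_two_resources[OF assms(1)]
  unfolding example_leader_cost_eq by (auto simp: single_load_def two_resources_def)

lemma leader_strategy_uniform: "leader_strategy two_resources uniform_strategy"
  by (simp add: leader_strategy_def uniform_strategy_def two_resources_def)

lemma example_leader_cost_uniform:
  assumes "example_NE \<sigma> \<nu>"
  shows "example_leader_cost uniform_strategy \<nu> = 3/2"
proof -
  have "real (\<nu> 0) + real (\<nu> 1) = 1"
    using assms by (intro config_two_resources) (simp only: example_NE_iff_config)
  then show ?thesis
    unfolding example_leader_cost_eq by (simp add: uniform_strategy_def two_resources_def field_simps)
qed

lemma worst_NE_cost_ge_three_halves:
  assumes "leader_strategy two_resources \<sigma>"
  shows "\<exists>\<nu>. example_NE \<sigma> \<nu> \<and> 3/2 \<le> example_leader_cost \<sigma> \<nu>"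
proof -
  have "1/2 \<le> \<sigma> 0 \<or> 1/2 \<le> \<sigma> 1"
    using leader_strategy_two_resources[OF assms] by linarith
  then obtain k where k: "k \<in> two_resources" "1/2 \<le> \<sigma> k"
    unfolding two_resources_def by blast
  show ?thesis
  proof (intro exI conjI)
    show "example_NE \<sigma> (single_load k)"
      unfolding example_NE_iff_config using k(1) by (rule config_single_load)
    show "3/2 \<le> example_leader_cost \<sigma> (single_load k)"
      using example_leader_cost_single_load[OF assms k(1)] k(2) by simp
  qed
qed

lemma example_PSE_uniform: "example_PSE uniform_strategy (single_load 0)"
  unfolding PSE_def
proof (intro conjI allI impI)
  show NE: "example_NE uniform_strategy (single_load 0)"
    unfolding example_NE_iff_config by (rule config_single_load) (simp add: two_resources_def)
  show "leader_strategy two_resources uniform_strategy"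
    by (rule leader_strategy_uniform)
  show "example_leader_cost uniform_strategy \<nu>' \<le> example_leader_cost uniform_strategy (single_load 0)"
    if "example_NE uniform_strategy \<nu>'" for \<nu>'
    using example_leader_cost_uniform[OF that] example_leader_cost_uniform[OF NE] by simp
  show "\<exists>\<nu>'. example_NE \<sigma>' \<nu>' \<and>
          example_leader_cost uniform_strategy (single_load 0) \<le> example_leader_cost \<sigma>' \<nu>'"
    if "leader_strategy two_resources \<sigma>'" for \<sigma>'
    using worst_NE_cost_ge_three_halves[OF that] example_leader_cost_uniform[OF NE] by auto
qed

lemma example_PSE_not_pure:
  assumes PSE: "example_PSE \<sigma> \<nu>"
  shows "\<not> pure_strategy two_resources \<sigma>"
proof
  assume "pure_strategy two_resources \<sigma>"
  then obtain k where k: "k \<in> two_resources" "\<sigma> k = 1"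
    by (auto simp: pure_strategy_def)
  have \<sigma>: "leader_strategy two_resources \<sigma>"
    using PSE by (simp add: PSE_def)
  obtain \<nu>' where NE': "example_NE uniform_strategy \<nu>'"
    and le_uniform: "example_leader_cost \<sigma> \<nu> \<le> example_leader_cost uniform_strategy \<nu>'"
    using PSE leader_strategy_uniform unfolding PSE_def by blast
  have "2 = example_leader_cost \<sigma> (single_load k)"
    using example_leader_cost_single_load[OF \<sigma> k(1)] k(2) by simp
  also have "\<dots> \<le> example_leader_cost \<sigma> \<nu>"
    using PSE config_single_load[OF k(1)] unfolding PSE_def example_NE_iff_config by blast
  also have "\<dots> \<le> 3/2"
    using le_uniform example_leader_cost_uniform[OF NE'] by simp
  finally show False by simp
qed

theorem mainTheorem15:
  shows "\<exists>(R :: nat set) (n :: nat) cl cf.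
           sscg R cl cf \<and> weakly_monotonic R cl cf \<and>
           (\<exists>\<sigma> \<nu>. PSE R n cl cf \<sigma> \<nu>) \<and>
           (\<forall>\<sigma> \<nu>. PSE R n cl cf \<sigma> \<nu> \<longrightarrow> \<not> pure_strategy R \<sigma>)"
  using example_game example_weakly_monotonic example_PSE_uniform example_PSE_not_pure
  by (intro exI[of _ two_resources] exI[of _ 1] exI[of _ load_leader_cost]
      exI[of _ occupied_follower_cost]) blast

end
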